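(* Let $h\in R$. Then for every $i\ge0$, the binary representation of $h$ does not end with the string $1(10)^i$.
   Context: Stern's sequence $(a(n))_{n\ge0}$: $a(0)=0$, $a(1)=1$, $a(2n)=a(n)$, $a(2n+1)=a(n)+a(n+1)$; $s(n)=a(n+1)$ for $n\ge0$. $R$ is the set of record-setters of $s$, i.e. indices $v\ge0$ with $s(i)<s(v)$ for all $i<v$. The binary representation of a positive integer has no leading zeros; $0$ is represented by the string $0$. $x^i$ denotes $i$-fold concatenation of the string $x$ ($x^0$ empty). *)

theory Defs
  imports Main "HOL-Library.Sublist"
begin

function stern :: "nat \<Rightarrow> nat" where
  "stern n = (if n = 0 then 0 else if n = 1 then 1
     else if even n then stern (n div 2) else stern (n div 2) + stern (n div 2 + 1))"
  by auto
termination by (relation "measure id") (auto, presburger)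

declare stern.simps[simp del]

definition s :: "nat \<Rightarrow> nat" where
  "s n = stern (n + 1)"

definition R :: "nat set" where
  "R = {v. \<forall>i<v. s i < s v}"

text \<open>Binary representation, most significant bit first, True = 1, False = 0;
  no leading zeros, and 0 is represented by the string 0.\<close>
fun bin :: "nat \<Rightarrow> bool list" where
  "bin n = (if n < 2 then [n = 1] else bin (n div 2) @ [odd n])"

declare bin.simps[simp del]

definition pat :: "nat \<Rightarrow> bool list" where
  "pat i = True # concat (replicate i [True, False])"

end

theory Submission
  imports Defs
begin

text \<open>If bin h ends with 1(10)^i then h = 4^i (2m+1) + c with c < 4^i, i.e. h is the binary
  string of 2m+1 followed by (10)^i. Since n \<mapsto> 4n+2 acts linearly on the pair
  (stern n, stern (n+1)), s h = stern (h+1) can be written in terms of stern m and stern (m+1),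
  and the same coefficients show that the smaller index j = 2(4^i m + c) has s j \<ge> s h,
  so h is no record-setter.\<close>

lemma stern_double: "stern (2 * n) = stern n"
  by (cases "n = 0") (simp add: stern.simps, subst stern.simps, auto)

lemma stern_double_Suc: "stern (2 * n + 1) = stern n + stern (n + 1)"
proof (cases "n = 0")
  case False
  then have "stern (2 * n + 1) = stern ((2 * n + 1) div 2) + stern ((2 * n + 1) div 2 + 1)"
    by (subst stern.simps) auto
  then show ?thesis by simp
qed (simp add: stern.simps)

lemma stern_4_times_plus_2: "stern (4 * n + 2) = stern n + stern (n + 1)"
proof -
  have "4 * n + 2 = 2 * (2 * n + 1)" by simp
  then show ?thesis by (simp only: stern_double stern_double_Suc)
qed

lemma stern_4_times_plus_3: "stern (4 * n + 3) = stern n + 2 * stern (n + 1)"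
proof -
  have "4 * n + 3 = 2 * (2 * n + 1) + 1" and "2 * n + 1 + 1 = 2 * (n + 1)" by simp_all
  then show ?thesis by (simp only: stern_double stern_double_Suc)
qed

text \<open>app10 i n has as binary representation that of n followed by (10)^i.\<close>
fun app10 :: "nat \<Rightarrow> nat \<Rightarrow> nat" where
  "app10 0 n = n"
| "app10 (Suc i) n = 4 * app10 i n + 2"

lemma app10_eq: "app10 i n = 4 ^ i * n + app10 i 0"
  by (induction i) (auto simp: algebra_simps)

lemma app10_0_less: "app10 i 0 < 4 ^ i"
  by (induction i) auto

lemma double_app10_less: "2 * app10 i m < app10 i (2 * m + 1)"
  using app10_0_less[of i] app10_eq[of i m] app10_eq[of i "2 * m + 1"]
  by (simp add: algebra_simps)

lemma stern_app10_linear: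
  "\<exists>p q. \<forall>n. stern (app10 i n) = p * stern n + q * stern (n + 1) \<and>
              stern (app10 i n + 1) = q * stern n + (p + q) * stern (n + 1)"
proof (induction i)
  case 0
  show ?case by (rule exI[of _ 1], rule exI[of _ 0]) simp
next
  case (Suc i)
  then obtain p q where pq:
    "\<And>n. stern (app10 i n) = p * stern n + q * stern (n + 1)"
    "\<And>n. stern (app10 i n + 1) = q * stern n + (p + q) * stern (n + 1)"
    by blast
  have "stern (app10 (Suc i) n) = (p + q) * stern n + (p + 2 * q) * stern (n + 1) \<and>
        stern (app10 (Suc i) n + 1) = (p + 2 * q) * stern n + (2 * p + 3 * q) * stern (n + 1)"
    for n
  proof -
    have "app10 (Suc i) n + 1 = 4 * app10 i n + 3" by simp
    then show ?thesis
      by (simp only: app10.simps stern_4_times_plus_2 stern_4_times_plus_3 pq)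
         (simp add: algebra_simps)
  qed
  then show ?case
    by (intro exI[of _ "p + q"] exI[of _ "p + 2 * q"]) (simp add: algebra_simps)
qed

lemma stern_app10_Suc_le:
  "stern (app10 i (2 * m + 1) + 1) \<le> stern (2 * app10 i m + 1)"
proof -
  obtain p q where pq:
    "\<And>n. stern (app10 i n) = p * stern n + q * stern (n + 1)"
    "\<And>n. stern (app10 i n + 1) = q * stern n + (p + q) * stern (n + 1)"
    using stern_app10_linear by blast
  have "stern (2 * m + 1 + 1) = stern (m + 1)"
    using stern_double[of "m + 1"] by simp
  then have "stern (app10 i (2 * m + 1) + 1) = q * stern m + (p + 2 * q) * stern (m + 1)"
    by (simp only: pq stern_double_Suc) (simp add: algebra_simps)
  moreover have "stern (2 * app10 i m + 1) = (p + q) * stern m + (p + 2 * q) * stern (m + 1)"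
    by (simp only: pq stern_double_Suc) (simp add: algebra_simps)
  ultimately show ?thesis by simp
qed

lemma length_bin_ge_2: "length (bin n) \<ge> 2 \<Longrightarrow> bin n = bin (n div 2) @ [odd n]"
  by (cases "n \<ge> 2") (auto simp: bin.simps)

lemma suffix_bin_snoc:
  assumes "suffix (xs @ [b]) (bin n)" and "xs \<noteq> []"
  shows "odd n = b \<and> suffix xs (bin (n div 2))"
proof -
  have "length (bin n) \<ge> 2"
    using suffix_length_le[OF assms(1)] assms(2) by (cases xs) auto
  then show ?thesis
    using assms(1) length_bin_ge_2 by (metis snoc_suffix_snoc)
qed

lemma odd_if_suffix_bin: "suffix [True] (bin n) \<Longrightarrow> odd n"
  by (cases "n < 2") (auto simp: bin.simps[of n] suffix_def)

lemma pat_Suc: "pat (Suc i) = (pat i @ [True]) @ [False]"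
  unfolding pat_def by (simp add: replicate_append_same[symmetric])

lemma suffix_pat_bin_imp_app10: "suffix (pat i) (bin h) \<Longrightarrow> \<exists>m. h = app10 i (2 * m + 1)"
proof (induction i arbitrary: h)
  case 0
  then have "odd h"
    by (intro odd_if_suffix_bin) (simp add: pat_def)
  then show ?case by (metis app10.simps(1) oddE)
next
  case (Suc i)
  have "even h" and "suffix (pat i @ [True]) (bin (h div 2))"
    using suffix_bin_snoc[of "pat i @ [True]" False h] Suc.prems by (auto simp: pat_Suc)
  moreover from this(2) have "odd (h div 2)" and "suffix (pat i) (bin (h div 2 div 2))"
    using suffix_bin_snoc[of "pat i" True "h div 2"] by (auto simp: pat_def)
  ultimately have "h = 4 * (h div 2 div 2) + 2"
    and "\<exists>m. h div 2 div 2 = app10 i (2 * m + 1)"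
    using Suc.IH by presburger+
  then show ?case by auto
qed

theorem mainTheorem5:
  fixes h :: nat
  assumes "h \<in> R"
  shows "\<forall>i. \<not> suffix (pat i) (bin h)"
proof (intro allI notI)
  fix i assume "suffix (pat i) (bin h)"
  then obtain m where h: "h = app10 i (2 * m + 1)"
    using suffix_pat_bin_imp_app10 by blast
  define j where "j = 2 * app10 i m"
  have "s j < s h"
    using assms double_app10_less[of i m] unfolding R_def h j_def by blast
  moreover have "s h \<le> s j"
    using stern_app10_Suc_le[of i m] unfolding s_def h j_def by simp
  ultimately show False by simp
qed

end
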